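(* Let $m\ge1$, $0<\lambda_1\le\dots\le\lambda_m$, $0<\Lambda_0\le\Lambda_1$, and let $a,b$ be positive definite $m\times m$ matrices with $\Lambda_0I\le a\le\Lambda_1I$ and $\Lambda_0I\le b\le\Lambda_1I$. For $w\in\mathbb{R}^m$ set $\theta=\Lambda_0^{-1}m\|a-b\|_s$ and $\phi=\Lambda_0^{-2}\|w\|^2\|a-b\|_s$. For any $M>0$ there is a constant $c_1=c_1(M)$ such that if $\theta,\phi<M$ then for all $t>0$, $$\Big|\frac{Q_m(w,\widetilde A(t))}{Q_m(w,\widetilde B(t))}-1\Big|\le c_1(\phi+\theta).$$
   Context: $E(s)$ is the diagonal matrix with entries $e^{-\lambda_is}$; $a(t)=\int_0^tE(s)\,a\,E(s)\,ds$ (so $a_{ij}(t)=a_{ij}(1-e^{-(\lambda_i+\lambda_j)t})/(\lambda_i+\lambda_j)$); $g(t)$ is diagonal with $g_{ii}(t)=(1-e^{-2\lambda_it})/(2\lambda_i)$ and $G(t)=g(t)^{-1}$; $\widetilde a(t)=G(t)^{1/2}a(t)G(t)^{1/2}$ and $\widetilde A(t)=\widetilde a(t)^{-1}$; $b(t),\widetilde b(t),\widetilde B(t)$ are defined analogously from $b$. $\|c\|_s=\max\{\sup_i\sum_j|c_{ij}|,\sup_j\sum_i|c_{ij}|\}$. $Q_m(w,C)=(2\pi)^{-m/2}(\det C)^{1/2}e^{-\langle w,Cw\rangle/2}$ for positive definite $C$. *)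

theory Defs
  imports "Jordan_Normal_Form.Determinant"
begin

text \<open>Real m x m matrices are represented as Jordan_Normal_Form matrices in carrier_mat m m,
  vectors in R^m as elements of carrier_vec m; indices range over 0..m-1.\<close>

definition pos_def_mat :: "nat \<Rightarrow> real mat \<Rightarrow> bool" where
  "pos_def_mat m A \<longleftrightarrow> A \<in> carrier_mat m m \<and> transpose_mat A = A \<and>
     (\<forall>x \<in> carrier_vec m. x \<noteq> 0\<^sub>v m \<longrightarrow> x \<bullet> (A *\<^sub>v x) > 0)"

definition loewner_between :: "nat \<Rightarrow> real \<Rightarrow> real \<Rightarrow> real mat \<Rightarrow> bool" where
  "loewner_between m L0 L1 A \<longleftrightarrow>
     (\<forall>x \<in> carrier_vec m. L0 * (x \<bullet> x) \<le> x \<bullet> (A *\<^sub>v x) \<and> x \<bullet> (A *\<^sub>v x) \<le> L1 * (x \<bullet> x))"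

definition inv_mat :: "real mat \<Rightarrow> real mat" where
  "inv_mat A = (THE B. B \<in> carrier_mat (dim_row A) (dim_row A) \<and> inverts_mat A B \<and> inverts_mat B A)"

text \<open>a(t) = int_0^t E(s) a E(s) ds, written entrywise.\<close>
definition mat_t :: "nat \<Rightarrow> (nat \<Rightarrow> real) \<Rightarrow> real mat \<Rightarrow> real \<Rightarrow> real mat" where
  "mat_t m lam a t = mat m m (\<lambda>(i,j). a $$ (i,j) * (1 - exp (-(lam i + lam j) * t)) / (lam i + lam j))"

definition g_mat :: "nat \<Rightarrow> (nat \<Rightarrow> real) \<Rightarrow> real \<Rightarrow> real mat" where
  "g_mat m lam t = mat m m (\<lambda>(i,j). if i = j then (1 - exp (-2 * lam i * t)) / (2 * lam i) else 0)"

definition G_mat :: "nat \<Rightarrow> (nat \<Rightarrow> real) \<Rightarrow> real \<Rightarrow> real mat" where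
  "G_mat m lam t = inv_mat (g_mat m lam t)"

definition G_half :: "nat \<Rightarrow> (nat \<Rightarrow> real) \<Rightarrow> real \<Rightarrow> real mat" where
  "G_half m lam t = mat m m (\<lambda>(i,j). if i = j then sqrt (G_mat m lam t $$ (i,i)) else 0)"

definition tilde_mat :: "nat \<Rightarrow> (nat \<Rightarrow> real) \<Rightarrow> real mat \<Rightarrow> real \<Rightarrow> real mat" where
  "tilde_mat m lam a t = G_half m lam t * mat_t m lam a t * G_half m lam t"

definition Tilde_inv :: "nat \<Rightarrow> (nat \<Rightarrow> real) \<Rightarrow> real mat \<Rightarrow> real \<Rightarrow> real mat" where
  "Tilde_inv m lam a t = inv_mat (tilde_mat m lam a t)"

definition s_norm :: "nat \<Rightarrow> real mat \<Rightarrow> real" where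
  "s_norm m c = max (Max {(\<Sum>j<m. \<bar>c $$ (i,j)\<bar>) | i. i < m})
                    (Max {(\<Sum>i<m. \<bar>c $$ (i,j)\<bar>) | j. j < m})"

definition Qm :: "nat \<Rightarrow> real vec \<Rightarrow> real mat \<Rightarrow> real" where
  "Qm m w C = (2 * pi) powr (- real m / 2) * sqrt (det C) * exp (- (w \<bullet> (C *\<^sub>v w)) / 2)"

definition vnorm :: "real vec \<Rightarrow> real" where
  "vnorm w = sqrt (w \<bullet> w)"

end

theory Submission
  imports Defs "Jordan_Normal_Form.Char_Poly" "HOL-Analysis.Analysis"
begin

(* Write h(c) = (1 - e^{-ct})/c = int_0^t e^{-c s} ds. Entrywise the normalised matrix is
   a~_ij = k_ij a_ij with k_ij = h(lam_i + lam_j) / sqrt (h(2 lam_i) h(2 lam_j)), and 0 <= k_ij <= 1 by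
   Cauchy-Schwarz; hence Schur's test bounds the bilinear form of b~ - a~ by ||a - b||_s. Writing
   x.a~x as int_0^t u(s).a u(s) ds with |x|^2 = int_0^t |u(s)|^2 ds shows a~ >= L0 I, likewise b~.
   Then Q_m(w,A~)/Q_m(w,B~) = sqrt (det b~ / det a~) * exp (-X/2) with
   X = w.A~w - w.B~w = (A~w).(b~ - a~)(B~w), so |X| <= phi; and det b~ / det a~ is the product of the
   m eigenvalues of a~^{-1} b~, which are real Rayleigh quotients within ||a - b||_s / L0 = theta/m
   of 1.  Both factors are therefore exp (O(theta + phi)), which gives c1 = 2 + e^M. *)

unbundle no vec_syntax
unbundle no inner_syntax
hide_type (open) Finite_Cartesian_Product.vec
hide_const (open) Finite_Cartesian_Product.vec Finite_Cartesian_Product.mat Determinants.det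

lemma sqrt_exp: "sqrt (exp x) = exp (x / 2)" for x :: real
  by (rule real_sqrt_unique) (simp_all add: power2_eq_square mult_exp_exp)

lemma exp_mult_exp_neg: "exp (- x * s) * exp (- y * s) = exp (- (x + y) * s)" for x y s :: real
  by (simp add: mult_exp_exp algebra_simps)

lemma exp_neg_double_le:
  fixes d :: real
  assumes "0 \<le> d" "d \<le> 1/2"
  shows "exp (-2 * d) \<le> 1 - d"
proof -
  have "1 \<le> (1 - d) * (1 + 2 * d)"
    using mult_left_mono[of "d * 2" 1 d] assms by (simp add: algebra_simps)
  also have "\<dots> \<le> (1 - d) * exp (2 * d)"
    using exp_ge_add_one_self[of "2 * d"] assms by (intro mult_left_mono) auto
  finally show ?thesis by (simp add: exp_minus field_simps)
qed

lemma exp_minus_one_le: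
  fixes u M :: real
  assumes "0 \<le> u" "u \<le> M"
  shows "exp u - 1 \<le> exp M * u"
proof -
  have "exp u * (1 - u) \<le> exp u * exp (-u)"
    using exp_ge_add_one_self[of "-u"] by (intro mult_left_mono) auto
  hence "exp u - 1 \<le> u * exp u" by (simp add: exp_minus field_simps)
  also have "\<dots> \<le> exp M * u" using assms by (simp add: mult.commute mult_left_mono)
  finally show ?thesis .
qed

lemma prod_list_le_exp:
  fixes \<mu>s :: "real list" and \<delta> :: real
  assumes "\<forall>\<mu>\<in>set \<mu>s. 0 < \<mu> \<and> \<bar>\<mu> - 1\<bar> \<le> \<delta>"
  shows "prod_list \<mu>s \<le> exp (length \<mu>s * \<delta>)"
  using assms
proof (induction \<mu>s)
  case (Cons \<mu> \<mu>s)
  have "\<mu> \<le> 1 + \<delta>" using Cons.prems by auto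
  also have "\<dots> \<le> exp \<delta>" by (rule exp_ge_add_one_self)
  finally have "\<mu> \<le> exp \<delta>" .
  moreover have "0 \<le> prod_list \<mu>s" using Cons.prems by (intro prod_list_nonneg) auto
  ultimately have "\<mu> * prod_list \<mu>s \<le> exp \<delta> * exp (length \<mu>s * \<delta>)"
    using Cons by (intro mult_mono) auto
  thus ?case by (simp add: mult_exp_exp algebra_simps)
qed simp

lemma exp_le_prod_list:
  fixes \<mu>s :: "real list" and \<delta> :: real
  assumes "\<forall>\<mu>\<in>set \<mu>s. \<bar>\<mu> - 1\<bar> \<le> \<delta>" and "\<delta> \<le> 1/2"
  shows "exp (-2 * (length \<mu>s * \<delta>)) \<le> prod_list \<mu>s"
  using assms(1)
proof (induction \<mu>s)
  case (Cons \<mu> \<mu>s)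
  have "0 \<le> \<delta>" using Cons.prems by force
  hence "exp (-2 * \<delta>) \<le> \<mu>" using exp_neg_double_le[of \<delta>] assms(2) Cons.prems by force
  moreover have "0 \<le> \<mu>" using Cons.prems assms(2) by force
  ultimately have "exp (-2 * \<delta>) * exp (-2 * (length \<mu>s * \<delta>)) \<le> \<mu> * prod_list \<mu>s"
    using Cons by (intro mult_mono) auto
  thus ?case by (simp add: mult_exp_exp algebra_simps)
qed simp

lemma sqrt_prod_list_mult_exp_le:
  fixes \<mu>s :: "real list" and \<delta> :: real
  assumes "\<forall>\<mu>\<in>set \<mu>s. 0 < \<mu> \<and> \<bar>\<mu> - 1\<bar> \<le> \<delta>" and "\<bar>X\<bar> \<le> \<phi>"
  shows "sqrt (prod_list \<mu>s) * exp (- X / 2) \<le> exp ((length \<mu>s * \<delta> + \<phi>) / 2)"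
proof -
  have "sqrt (prod_list \<mu>s) * exp (- X / 2) \<le> exp (length \<mu>s * \<delta> / 2) * exp (\<phi> / 2)"
  proof (rule mult_mono)
    show "sqrt (prod_list \<mu>s) \<le> exp (length \<mu>s * \<delta> / 2)"
      using real_sqrt_le_mono[OF prod_list_le_exp[OF assms(1)]] by (simp add: sqrt_exp)
  qed (use assms(2) in auto)
  thus ?thesis by (simp add: mult_exp_exp add_divide_distrib)
qed

lemma exp_le_sqrt_prod_list_mult_exp:
  fixes \<mu>s :: "real list" and \<delta> :: real
  assumes "\<forall>\<mu>\<in>set \<mu>s. \<bar>\<mu> - 1\<bar> \<le> \<delta>" and "\<delta> \<le> 1/2" and "\<bar>X\<bar> \<le> \<phi>"
  shows "exp (- (length \<mu>s * \<delta>) - \<phi> / 2) \<le> sqrt (prod_list \<mu>s) * exp (- X / 2)"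
proof -
  have P: "exp (-2 * (length \<mu>s * \<delta>)) \<le> prod_list \<mu>s" by (rule exp_le_prod_list[OF assms(1,2)])
  have "exp (- (length \<mu>s * \<delta>)) * exp (- \<phi> / 2) \<le> sqrt (prod_list \<mu>s) * exp (- X / 2)"
  proof (rule mult_mono)
    show "exp (- (length \<mu>s * \<delta>)) \<le> sqrt (prod_list \<mu>s)"
      using real_sqrt_le_mono[OF P] by (simp add: sqrt_exp)
  qed (use assms(3) P order_trans[OF exp_ge_zero P] in auto)
  thus ?thesis by (simp add: mult_exp_exp)
qed

lemma abs_sqrt_prod_list_mult_exp_minus_one_le:
  fixes \<mu>s :: "real list" and \<delta> :: real
  assumes len: "length \<mu>s = m" and m: "m \<ge> 1"
    and \<mu>s: "\<forall>\<mu>\<in>set \<mu>s. 0 < \<mu> \<and> \<bar>\<mu> - 1\<bar> \<le> \<delta>"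
    and \<theta>M: "real m * \<delta> < M" and X: "\<bar>X\<bar> \<le> \<phi>" and \<phi>M: "\<phi> < M"
  shows "\<bar>sqrt (prod_list \<mu>s) * exp (- X / 2) - 1\<bar> \<le> (2 + exp M) * (\<phi> + real m * \<delta>)"
proof -
  define \<theta> where "\<theta> = real m * \<delta>"
  define R where "R = sqrt (prod_list \<mu>s) * exp (- X / 2)"
  obtain \<mu>0 where "\<mu>0 \<in> set \<mu>s" using len m by (cases \<mu>s) auto
  hence \<delta>0: "0 \<le> \<delta>" using \<mu>s by force
  hence \<theta>0: "0 \<le> \<theta>" and \<phi>0: "0 \<le> \<phi>" using X by (auto simp: \<theta>_def)
  have "R - 1 \<le> exp M * ((\<theta> + \<phi>) / 2)"
    using sqrt_prod_list_mult_exp_le[OF \<mu>s X] exp_minus_one_le[of "(\<theta> + \<phi>) / 2" M] \<theta>0 \<phi>0 \<theta>M \<phi>M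
    by (simp add: R_def \<theta>_def len)
  moreover have "1 - R \<le> 2 * \<phi> + 2 * \<theta>"
  proof (cases "\<delta> \<le> 1/2")
    case True
    have "1 - (\<theta> + \<phi> / 2) \<le> exp (- \<theta> - \<phi> / 2)"
      using exp_ge_add_one_self[of "- \<theta> - \<phi> / 2"] by linarith
    also have "\<dots> \<le> R"
      using exp_le_sqrt_prod_list_mult_exp[of \<mu>s \<delta> X \<phi>] \<mu>s True X by (simp add: R_def \<theta>_def len)
    finally show ?thesis using \<theta>0 \<phi>0 by linarith
  next
    case False
    moreover have "1 * \<delta> \<le> \<theta>" unfolding \<theta>_def using m \<delta>0 by (intro mult_right_mono) auto
    ultimately have "1 \<le> 2 * \<theta>" by linarith
    moreover have "0 \<le> R" using \<mu>s by (simp add: R_def prod_list_nonneg less_imp_le)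
    ultimately show ?thesis using \<phi>0 by linarith
  qed
  moreover have "exp M * ((\<theta> + \<phi>) / 2) \<le> exp M * (\<phi> + \<theta>)"
    using \<theta>0 \<phi>0 by (intro mult_left_mono) auto
  ultimately show ?thesis
    unfolding R_def[symmetric] \<theta>_def[symmetric] by (simp add: algebra_simps abs_le_iff)
qed

lemma scalar_prod_mult_mat_vec_eq_sum:
  fixes A :: "'a::comm_ring mat"
  assumes "A \<in> carrier_mat m m" and "x \<in> carrier_vec m" and "y \<in> carrier_vec m"
  shows "x \<bullet> (A *\<^sub>v y) = (\<Sum>i<m. \<Sum>j<m. x $ i * A $$ (i, j) * y $ j)"
  using assms by (auto simp: scalar_prod_def sum_distrib_left mult.assoc atLeast0LessThan intro!: sum.cong)

lemma inv_mat_eqI: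
  fixes A B :: "real mat"
  assumes A: "A \<in> carrier_mat n n" and B: "B \<in> carrier_mat n n" and AB: "A * B = 1\<^sub>m n"
  shows "inv_mat A = B"
  unfolding inv_mat_def
proof (rule the_equality)
  have "B * A = 1\<^sub>m n" by (rule mat_mult_left_right_inverse[OF A B AB])
  thus "B \<in> carrier_mat (dim_row A) (dim_row A) \<and> inverts_mat A B \<and> inverts_mat B A"
    using A B AB by (auto simp: inverts_mat_def)
  fix B' assume "B' \<in> carrier_mat (dim_row A) (dim_row A) \<and> inverts_mat A B' \<and> inverts_mat B' A"
  hence B': "B' \<in> carrier_mat n n" and AB': "A * B' = 1\<^sub>m n" using A by (auto simp: inverts_mat_def)
  have "B' = (B * A) * B'" using \<open>B * A = 1\<^sub>m n\<close> B' by simp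
  also have "\<dots> = B * (A * B')" using A B B' by (simp add: assoc_mult_mat)
  finally show "B' = B" using AB' B by simp
qed

lemma inv_mat_mat_diag:
  assumes "\<And>i. i < n \<Longrightarrow> f i \<noteq> 0"
  shows "inv_mat (mat_diag n f) = mat_diag n (\<lambda>i. 1 / f i)"
proof (rule inv_mat_eqI[of _ n])
  show "mat_diag n f * mat_diag n (\<lambda>i. 1 / f i) = 1\<^sub>m n"
    unfolding mat_diag_diag by (rule eq_matI) (auto simp: mat_diag_def assms)
qed auto

lemma inv_mat_if_det_nonzero:
  fixes A :: "real mat"
  assumes A: "A \<in> carrier_mat m m" and det: "det A \<noteq> 0"
  shows "inv_mat A \<in> carrier_mat m m" and "A * inv_mat A = 1\<^sub>m m" and "inv_mat A * A = 1\<^sub>m m"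
proof -
  have "A \<in> Units (ring_mat TYPE(real) m undefined)" by (rule det_non_zero_imp_unit[OF A det])
  then obtain B where B: "B \<in> carrier_mat m m" and AB: "A * B = 1\<^sub>m m" and BA: "B * A = 1\<^sub>m m"
    unfolding Units_def ring_mat_def by auto
  have "inv_mat A = B" by (rule inv_mat_eqI[OF A B AB])
  thus "inv_mat A \<in> carrier_mat m m" "A * inv_mat A = 1\<^sub>m m" "inv_mat A * A = 1\<^sub>m m"
    using B AB BA by simp_all
qed

lemma det_inv_mat:
  fixes A :: "real mat"
  assumes A: "A \<in> carrier_mat m m" and det: "det A \<noteq> 0"
  shows "det (inv_mat A) = 1 / det A"
proof -
  have "det A * det (inv_mat A) = 1"
    using det_mult[OF A inv_mat_if_det_nonzero(1)[OF A det]] inv_mat_if_det_nonzero(2)[OF A det] by simp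
  thus ?thesis using det by (simp add: field_simps)
qed

section \<open>Schur's test\<close>

lemma abs_double_sum_le_schur:
  fixes E c :: "nat \<Rightarrow> nat \<Rightarrow> real" and p q :: "nat \<Rightarrow> real"
  assumes E: "\<And>i j. i < m \<Longrightarrow> j < m \<Longrightarrow> \<bar>E i j\<bar> \<le> c i j"
    and rows: "\<And>i. i < m \<Longrightarrow> (\<Sum>j<m. c i j) \<le> \<sigma>"
    and cols: "\<And>j. j < m \<Longrightarrow> (\<Sum>i<m. c i j) \<le> \<sigma>"
  shows "\<bar>\<Sum>i<m. \<Sum>j<m. p i * E i j * q j\<bar> \<le> \<sigma> / 2 * ((\<Sum>i<m. (p i)\<^sup>2) + (\<Sum>j<m. (q j)\<^sup>2))"
proof -
  have "\<bar>\<Sum>i<m. \<Sum>j<m. p i * E i j * q j\<bar> \<le> (\<Sum>i<m. \<Sum>j<m. \<bar>p i * E i j * q j\<bar>)"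
    by (rule order_trans[OF sum_abs], rule sum_mono, rule sum_abs)
  also have "\<dots> \<le> (\<Sum>i<m. \<Sum>j<m. c i j * ((p i)\<^sup>2 / 2 + (q j)\<^sup>2 / 2))"
  proof (intro sum_mono)
    fix i j assume "i \<in> {..<m}" "j \<in> {..<m}"
    hence "\<bar>E i j\<bar> \<le> c i j" using E by simp
    moreover have "\<bar>p i\<bar> * \<bar>q j\<bar> \<le> (p i)\<^sup>2 / 2 + (q j)\<^sup>2 / 2"
      using sum_squares_bound[of "\<bar>p i\<bar>" "\<bar>q j\<bar>"] by (simp add: power2_eq_square)
    ultimately have "\<bar>E i j\<bar> * (\<bar>p i\<bar> * \<bar>q j\<bar>) \<le> c i j * ((p i)\<^sup>2 / 2 + (q j)\<^sup>2 / 2)"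
      by (intro mult_mono) auto
    thus "\<bar>p i * E i j * q j\<bar> \<le> c i j * ((p i)\<^sup>2 / 2 + (q j)\<^sup>2 / 2)"
      by (simp add: abs_mult mult_ac)
  qed
  also have "\<dots> = (\<Sum>i<m. (p i)\<^sup>2 / 2 * (\<Sum>j<m. c i j)) + (\<Sum>j<m. (q j)\<^sup>2 / 2 * (\<Sum>i<m. c i j))"
  proof -
    have "(\<Sum>i<m. \<Sum>j<m. c i j * ((p i)\<^sup>2 / 2 + (q j)\<^sup>2 / 2))
       = (\<Sum>i<m. \<Sum>j<m. c i j * ((p i)\<^sup>2 / 2)) + (\<Sum>i<m. \<Sum>j<m. c i j * ((q j)\<^sup>2 / 2))"
      by (simp add: distrib_left sum.distrib)
    also have "(\<Sum>i<m. \<Sum>j<m. c i j * ((q j)\<^sup>2 / 2)) = (\<Sum>j<m. \<Sum>i<m. c i j * ((q j)\<^sup>2 / 2))"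
      by (rule sum.swap)
    finally show ?thesis
      unfolding sum_distrib_left by (simp add: mult.commute)
  qed
  also have "\<dots> \<le> (\<Sum>i<m. (p i)\<^sup>2 / 2 * \<sigma>) + (\<Sum>j<m. (q j)\<^sup>2 / 2 * \<sigma>)"
    by (intro add_mono sum_mono mult_left_mono) (auto simp: rows cols)
  also have "\<dots> = \<sigma> / 2 * ((\<Sum>i<m. (p i)\<^sup>2) + (\<Sum>j<m. (q j)\<^sup>2))"
    by (simp add: algebra_simps sum_distrib_left sum_distrib_right sum_divide_distrib)
  finally show ?thesis .
qed

lemma row_sum_le_s_norm: "i < m \<Longrightarrow> (\<Sum>j<m. \<bar>c $$ (i, j)\<bar>) \<le> s_norm m c"
  unfolding s_norm_def by (rule max.coboundedI1, rule Max_ge) auto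

lemma col_sum_le_s_norm: "j < m \<Longrightarrow> (\<Sum>i<m. \<bar>c $$ (i, j)\<bar>) \<le> s_norm m c"
  unfolding s_norm_def by (rule max.coboundedI2, rule Max_ge) auto

lemma s_norm_nonneg: "1 \<le> m \<Longrightarrow> 0 \<le> s_norm m c"
  by (rule order_trans[OF sum_nonneg row_sum_le_s_norm[of 0]]) auto

lemma abs_scalar_prod_mult_mat_vec_le_s_norm:
  fixes E C :: "real mat"
  assumes E: "E \<in> carrier_mat m m"
    and entries: "\<And>i j. i < m \<Longrightarrow> j < m \<Longrightarrow> \<bar>E $$ (i, j)\<bar> \<le> \<bar>C $$ (i, j)\<bar>"
    and p: "p \<in> carrier_vec m" and q: "q \<in> carrier_vec m"
  shows "\<bar>p \<bullet> (E *\<^sub>v q)\<bar> \<le> s_norm m C / 2 * (p \<bullet> p + q \<bullet> q)"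
proof -
  have "p \<bullet> p = (\<Sum>i<m. (p $ i)\<^sup>2)" "q \<bullet> q = (\<Sum>i<m. (q $ i)\<^sup>2)"
    using p q by (simp_all add: scalar_prod_def atLeast0LessThan power2_eq_square)
  moreover have "\<bar>\<Sum>i<m. \<Sum>j<m. p $ i * E $$ (i, j) * q $ j\<bar>
      \<le> s_norm m C / 2 * ((\<Sum>i<m. (p $ i)\<^sup>2) + (\<Sum>j<m. (q $ j)\<^sup>2))"
    by (rule abs_double_sum_le_schur[where c = "\<lambda>i j. \<bar>C $$ (i, j)\<bar>"])
      (auto simp: entries row_sum_le_s_norm col_sum_le_s_norm)
  ultimately show ?thesis by (simp add: scalar_prod_mult_mat_vec_eq_sum[OF E p q])
qed

section \<open>The normalised matrices\<close>

definition decay_integral :: "real \<Rightarrow> real \<Rightarrow> real" where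
  "decay_integral t c = (1 - exp (- c * t)) / c"

lemma decay_integral_pos: "0 < c \<Longrightarrow> 0 < t \<Longrightarrow> 0 < decay_integral t c"
  unfolding decay_integral_def by (auto intro!: divide_pos_pos simp: mult_pos_pos)

lemma has_integral_exp_decay:
  assumes "c \<noteq> 0" and "0 \<le> t"
  shows "((\<lambda>s. exp (- c * s)) has_integral decay_integral t c) {0..t}"
proof -
  have "((\<lambda>s. - exp (- c * s) / c) has_vector_derivative exp (- c * s)) (at s within {0..t})" for s
    using assms(1) by (auto intro!: derivative_eq_intros simp flip: has_real_derivative_iff_has_vector_derivative)
  hence "((\<lambda>s. exp (- c * s)) has_integral (- exp (- c * t) / c) - (- exp (- c * 0) / c)) {0..t}"
    by (intro fundamental_theorem_of_calculus assms(2))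
  thus ?thesis by (simp add: decay_integral_def diff_divide_distrib)
qed

text \<open>Cauchy-Schwarz: the integral of \<open>(\<alpha> e\<^sup>-\<^sup>x\<^sup>s - \<beta> e\<^sup>-\<^sup>y\<^sup>s)\<^sup>2\<close> over \<open>[0, t]\<close>
  is nonnegative.\<close>

lemma decay_integral_add_le:
  assumes x: "0 < x" and y: "0 < y" and t: "0 < t"
  shows "decay_integral t (x + y) \<le> sqrt (decay_integral t (2 * x)) * sqrt (decay_integral t (2 * y))"
proof -
  define \<alpha> \<beta> where "\<alpha> = sqrt (decay_integral t (2 * y))" and "\<beta> = sqrt (decay_integral t (2 * x))"
  have \<alpha>2: "\<alpha>\<^sup>2 = decay_integral t (2 * y)" and \<beta>2: "\<beta>\<^sup>2 = decay_integral t (2 * x)"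
    using x y t by (simp_all add: \<alpha>_def \<beta>_def decay_integral_pos less_imp_le)
  have \<alpha>\<beta>: "0 < \<alpha> * \<beta>" using x y t by (simp add: \<alpha>_def \<beta>_def decay_integral_pos)
  have square: "(\<alpha> * exp (- x * s) - \<beta> * exp (- y * s))\<^sup>2
      = \<alpha>\<^sup>2 * exp (- (2 * x) * s) - 2 * (\<alpha> * \<beta>) * exp (- (x + y) * s) + \<beta>\<^sup>2 * exp (- (2 * y) * s)" for s
    using exp_mult_exp_neg[of x s x] exp_mult_exp_neg[of x s y] exp_mult_exp_neg[of y s y]
    by (simp add: power2_eq_square algebra_simps)
  have "((\<lambda>s. (\<alpha> * exp (- x * s) - \<beta> * exp (- y * s))\<^sup>2) has_integral
      \<alpha>\<^sup>2 * decay_integral t (2 * x) - 2 * (\<alpha> * \<beta>) * decay_integral t (x + y) + \<beta>\<^sup>2 * decay_integral t (2 * y)) {0..t}"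
    unfolding square
    by (intro has_integral_add has_integral_diff has_integral_mult_right has_integral_exp_decay)
      (use x y t in auto)
  hence "0 \<le> \<alpha>\<^sup>2 * decay_integral t (2 * x) - 2 * (\<alpha> * \<beta>) * decay_integral t (x + y) + \<beta>\<^sup>2 * decay_integral t (2 * y)"
    by (rule has_integral_nonneg) simp
  also have "\<dots> = 2 * (\<alpha> * \<beta>) * (\<alpha> * \<beta> - decay_integral t (x + y))"
    unfolding \<alpha>2[symmetric] \<beta>2[symmetric] by (simp add: power2_eq_square algebra_simps)
  finally have "decay_integral t (x + y) \<le> \<alpha> * \<beta>" using \<alpha>\<beta> by (simp add: zero_le_mult_iff)
  thus ?thesis by (simp add: \<alpha>_def \<beta>_def mult.commute)
qed

definition tilde_weight :: "(nat \<Rightarrow> real) \<Rightarrow> real \<Rightarrow> nat \<Rightarrow> nat \<Rightarrow> real" where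
  "tilde_weight lam t i j = decay_integral t (lam i + lam j) /
     (sqrt (decay_integral t (2 * lam i)) * sqrt (decay_integral t (2 * lam j)))"

lemma tilde_weight_commute: "tilde_weight lam t i j = tilde_weight lam t j i"
  by (simp add: tilde_weight_def add.commute mult.commute)

text \<open>The vector \<open>E(s) G(t)\<^sup>1\<^sup>/\<^sup>2 x\<close>.\<close>

definition decay_path :: "nat \<Rightarrow> (nat \<Rightarrow> real) \<Rightarrow> real \<Rightarrow> real vec \<Rightarrow> real \<Rightarrow> real vec" where
  "decay_path m lam t x s = Matrix.vec m (\<lambda>i. exp (- lam i * s) * x $ i / sqrt (decay_integral t (2 * lam i)))"

lemma decay_path_carrier [simp]: "decay_path m lam t x s \<in> carrier_vec m"
  by (simp add: decay_path_def)

lemma mat_t_eq: "mat_t m lam a t = Matrix.mat m m (\<lambda>(i, j). a $$ (i, j) * decay_integral t (lam i + lam j))"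
  unfolding mat_t_def decay_integral_def by (rule eq_matI) auto

lemma g_mat_eq: "g_mat m lam t = mat_diag m (\<lambda>i. decay_integral t (2 * lam i))"
  unfolding g_mat_def mat_diag_def decay_integral_def by (rule eq_matI) auto

context
  fixes m :: nat and lam :: "nat \<Rightarrow> real" and t :: real
  assumes lam_pos: "\<forall>i<m. 0 < lam i" and t_pos: "0 < t"
begin

lemma decay_integral_double_pos: "i < m \<Longrightarrow> 0 < decay_integral t (2 * lam i)"
  using lam_pos t_pos by (simp add: decay_integral_pos)

lemma decay_integral_sum_pos: "i < m \<Longrightarrow> j < m \<Longrightarrow> 0 < decay_integral t (lam i + lam j)"
  using lam_pos t_pos by (simp add: decay_integral_pos add_pos_pos)

lemma G_half_eq: "G_half m lam t = mat_diag m (\<lambda>i. 1 / sqrt (decay_integral t (2 * lam i)))"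
proof -
  have "G_mat m lam t = mat_diag m (\<lambda>i. 1 / decay_integral t (2 * lam i))"
    unfolding G_mat_def g_mat_eq
    by (intro inv_mat_mat_diag) (simp add: decay_integral_double_pos dual_order.strict_implies_not_eq)
  thus ?thesis unfolding G_half_def mat_diag_def by (intro eq_matI) (auto simp: real_sqrt_divide)
qed

lemma tilde_mat_eq: "tilde_mat m lam a t = Matrix.mat m m (\<lambda>(i, j). tilde_weight lam t i j * a $$ (i, j))"
proof -
  have "mat_t m lam a t \<in> carrier_mat m m" by (simp add: mat_t_eq)
  thus ?thesis
    unfolding tilde_mat_def G_half_eq mat_diag_mult_left[OF \<open>mat_t m lam a t \<in> carrier_mat m m\<close>]
    by (subst mat_diag_mult_right[of _ m]) (auto intro!: eq_matI simp: mat_t_eq tilde_weight_def)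
qed

lemma tilde_mat_carrier: "tilde_mat m lam a t \<in> carrier_mat m m"
  by (simp add: tilde_mat_eq)

lemma tilde_weight_nonneg: "i < m \<Longrightarrow> j < m \<Longrightarrow> 0 \<le> tilde_weight lam t i j"
  unfolding tilde_weight_def
  by (intro divide_nonneg_nonneg mult_nonneg_nonneg)
    (simp_all add: decay_integral_sum_pos decay_integral_double_pos less_imp_le)

lemma tilde_weight_le_one: "i < m \<Longrightarrow> j < m \<Longrightarrow> tilde_weight lam t i j \<le> 1"
  using decay_integral_add_le[of "lam i" "lam j" t] decay_integral_double_pos[of i] decay_integral_double_pos[of j]
    lam_pos t_pos by (simp add: tilde_weight_def)

lemma tilde_weight_diag: "i < m \<Longrightarrow> tilde_weight lam t i i = 1"
  using decay_integral_double_pos[of i] by (simp add: tilde_weight_def mult_2[symmetric])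

lemma tilde_mat_one: "tilde_mat m lam (1\<^sub>m m) t = 1\<^sub>m m"
  unfolding tilde_mat_eq by (rule eq_matI) (auto simp: tilde_weight_diag)

lemma transpose_tilde_mat:
  assumes "a \<in> carrier_mat m m" and "transpose_mat a = a"
  shows "transpose_mat (tilde_mat m lam a t) = tilde_mat m lam a t"
proof -
  have "a $$ (j, i) = a $$ (i, j)" if "i < m" "j < m" for i j
    using assms that by (metis carrier_matD index_transpose_mat(1))
  thus ?thesis unfolding tilde_mat_eq by (intro eq_matI) (auto simp: tilde_weight_commute)
qed

lemma has_integral_tilde_quadratic_form:
  assumes a: "a \<in> carrier_mat m m" and x: "x \<in> carrier_vec m"
  shows "((\<lambda>s. decay_path m lam t x s \<bullet> (a *\<^sub>v decay_path m lam t x s))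
    has_integral x \<bullet> (tilde_mat m lam a t *\<^sub>v x)) {0..t}"
proof -
  define c where "c i = x $ i / sqrt (decay_integral t (2 * lam i))" for i
  have path: "decay_path m lam t x s \<bullet> (a *\<^sub>v decay_path m lam t x s)
      = (\<Sum>i<m. \<Sum>j<m. (c i * a $$ (i, j) * c j) * exp (- (lam i + lam j) * s))" for s
    unfolding scalar_prod_mult_mat_vec_eq_sum[OF a decay_path_carrier decay_path_carrier]
    by (intro sum.cong refl) (simp add: decay_path_def c_def flip: exp_mult_exp_neg; simp add: mult_exp_exp algebra_simps)
  have tilde: "x \<bullet> (tilde_mat m lam a t *\<^sub>v x)
      = (\<Sum>i<m. \<Sum>j<m. (c i * a $$ (i, j) * c j) * decay_integral t (lam i + lam j))"
    unfolding scalar_prod_mult_mat_vec_eq_sum[OF tilde_mat_carrier x x]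
    by (intro sum.cong refl) (simp_all add: tilde_mat_eq tilde_weight_def c_def)
  show ?thesis
    unfolding path tilde
    by (intro has_integral_sum has_integral_mult_right has_integral_exp_decay finite_lessThan)
      (use lam_pos t_pos in \<open>auto simp: add_pos_pos dual_order.strict_implies_not_eq\<close>)
qed

lemma tilde_mat_lower_bound:
  assumes a: "a \<in> carrier_mat m m" and lb: "\<forall>x\<in>carrier_vec m. L0 * (x \<bullet> x) \<le> x \<bullet> (a *\<^sub>v x)"
    and x: "x \<in> carrier_vec m"
  shows "L0 * (x \<bullet> x) \<le> x \<bullet> (tilde_mat m lam a t *\<^sub>v x)"
proof (rule has_integral_le)
  show "((\<lambda>s. L0 * (decay_path m lam t x s \<bullet> decay_path m lam t x s)) has_integral L0 * (x \<bullet> x)) {0..t}"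
    using has_integral_tilde_quadratic_form[OF one_carrier_mat x]
    by (intro has_integral_mult_right) (simp add: tilde_mat_one x)
  show "((\<lambda>s. decay_path m lam t x s \<bullet> (a *\<^sub>v decay_path m lam t x s))
      has_integral x \<bullet> (tilde_mat m lam a t *\<^sub>v x)) {0..t}"
    by (rule has_integral_tilde_quadratic_form[OF a x])
qed (use lb in simp)

lemma abs_scalar_prod_tilde_mat_diff_le:
  assumes a: "a \<in> carrier_mat m m" and b: "b \<in> carrier_mat m m"
    and p: "p \<in> carrier_vec m" and q: "q \<in> carrier_vec m"
  shows "\<bar>p \<bullet> ((tilde_mat m lam b t - tilde_mat m lam a t) *\<^sub>v q)\<bar>
    \<le> s_norm m (a - b) / 2 * (p \<bullet> p + q \<bullet> q)"
proof (rule abs_scalar_prod_mult_mat_vec_le_s_norm[OF _ _ p q])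
  show "tilde_mat m lam b t - tilde_mat m lam a t \<in> carrier_mat m m"
    by (intro minus_carrier_mat tilde_mat_carrier)
  fix i j assume ij: "i < m" "j < m"
  hence "\<bar>(tilde_mat m lam b t - tilde_mat m lam a t) $$ (i, j)\<bar> = tilde_weight lam t i j * \<bar>(a - b) $$ (i, j)\<bar>"
    using a b tilde_weight_nonneg[OF ij]
    by (simp add: tilde_mat_eq abs_mult abs_minus_commute flip: right_diff_distrib)
  also have "\<dots> \<le> \<bar>(a - b) $$ (i, j)\<bar>"
    using tilde_weight_nonneg[OF ij] tilde_weight_le_one[OF ij] by (simp add: mult_left_le_one_le)
  finally show "\<bar>(tilde_mat m lam b t - tilde_mat m lam a t) $$ (i, j)\<bar> \<le> \<bar>(a - b) $$ (i, j)\<bar>" .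
qed

end

section \<open>Symmetric matrices bounded below\<close>

definition sym_coercive_mat :: "nat \<Rightarrow> real \<Rightarrow> real mat \<Rightarrow> bool" where
  "sym_coercive_mat m L0 A \<longleftrightarrow> A \<in> carrier_mat m m \<and> transpose_mat A = A \<and>
     (\<forall>x\<in>carrier_vec m. L0 * (x \<bullet> x) \<le> x \<bullet> (A *\<^sub>v x))"

text \<open>For real symmetric \<open>A\<close> this is \<open>v\<^sup>* A v\<close> at the complex vector \<open>v = x + i y\<close>.\<close>

definition hermitian_form :: "real mat \<Rightarrow> real vec \<Rightarrow> real vec \<Rightarrow> real" where
  "hermitian_form A x y = x \<bullet> (A *\<^sub>v x) + y \<bullet> (A *\<^sub>v y)"

lemma hermitian_form_lower_bound:
  assumes "sym_coercive_mat m L0 A" and "x \<in> carrier_vec m" and "y \<in> carrier_vec m"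
  shows "L0 * (x \<bullet> x + y \<bullet> y) \<le> hermitian_form A x y"
  using assms by (auto simp: sym_coercive_mat_def hermitian_form_def distrib_left intro: add_mono)

lemma hermitian_form_diff:
  assumes "A \<in> carrier_mat m m" and "B \<in> carrier_mat m m" and "x \<in> carrier_vec m" and "y \<in> carrier_vec m"
  shows "hermitian_form B x y - hermitian_form A x y = x \<bullet> ((B - A) *\<^sub>v x) + y \<bullet> ((B - A) *\<^sub>v y)"
  using assms by (simp add: hermitian_form_def minus_mult_distrib_mat_vec scalar_prod_minus_distrib[of _ m])

lemma hermitian_form_complex:
  fixes A :: "real mat" and v :: "complex vec"
  assumes A: "A \<in> carrier_mat m m" and sym: "transpose_mat A = A" and v: "v \<in> carrier_vec m"
  shows "(\<Sum>i<m. cnj (v $ i) * (map_mat complex_of_real A *\<^sub>v v) $ i)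
    = complex_of_real (hermitian_form A (map_vec Re v) (map_vec Im v))"
proof -
  have Aji: "A $$ (j, i) = A $$ (i, j)" if "i < m" "j < m" for i j
    using A sym that by (metis carrier_matD index_transpose_mat(1))
  have lhs: "(\<Sum>i<m. cnj (v $ i) * (map_mat complex_of_real A *\<^sub>v v) $ i)
     = (\<Sum>i<m. \<Sum>j<m. complex_of_real (A $$ (i, j)) * (cnj (v $ i) * v $ j))"
    using A v by (auto simp: scalar_prod_def sum_distrib_left atLeast0LessThan algebra_simps intro!: sum.cong)
  have rhs: "hermitian_form A (map_vec Re v) (map_vec Im v)
     = (\<Sum>i<m. \<Sum>j<m. A $$ (i, j) * (Re (v $ i) * Re (v $ j) + Im (v $ i) * Im (v $ j)))"
    unfolding hermitian_form_def
    using v by (auto simp: scalar_prod_mult_mat_vec_eq_sum[OF A] sum.distrib[symmetric] algebra_simps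
        intro!: sum.cong)
  have "(\<Sum>i<m. \<Sum>j<m. A $$ (i, j) * (Im (v $ i) * Re (v $ j)))
      = (\<Sum>j<m. \<Sum>i<m. A $$ (i, j) * (Im (v $ i) * Re (v $ j)))" by (rule sum.swap)
  also have "\<dots> = (\<Sum>i<m. \<Sum>j<m. A $$ (i, j) * (Re (v $ i) * Im (v $ j)))"
    by (intro sum.cong refl) (simp add: Aji)
  finally have imaginary_part: "(\<Sum>i<m. \<Sum>j<m. A $$ (i, j) * (Re (v $ i) * Im (v $ j) - Im (v $ i) * Re (v $ j))) = 0"
    by (simp add: right_diff_distrib sum_subtractf)
  show ?thesis unfolding lhs rhs
    by (rule complex_eqI) (simp_all add: Re_sum Im_sum imaginary_part)
qed

lemma prod_list_uminus: "prod_list (map uminus xs) = (-1::'a::comm_ring_1) ^ length xs * prod_list xs"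
  by (induction xs) auto

lemma det_eq_prod_list_eigenvalues:
  fixes C :: "complex mat"
  assumes C: "C \<in> carrier_mat m m"
  obtains as where "length as = m" and "det C = prod_list as" and "\<And>a. a \<in> set as \<Longrightarrow> eigenvalue C a"
proof -
  obtain as where cp: "char_poly C = (\<Prod>a\<leftarrow>as. [:- a, 1:])" and len: "length as = m"
    using char_poly_factorized[OF C] by blast
  have "eigenvalue C a" if "a \<in> set as" for a
    using that eigenvalue_root_char_poly[OF C] by (auto simp: cp poly_prod_list prod_list_zero_iff)
  moreover have "det C = prod_list as"
  proof -
    have "poly (char_poly C) 0 = det (- (char_matrix C 0))" by (rule char_poly_matrix[OF C])
    also have "- (char_matrix C 0) = (-1) \<cdot>\<^sub>m C" using C by (intro eq_matI) (auto simp: char_matrix_def)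
    also have "det \<dots> = (-1) ^ m * det C" using C by simp
    finally have "poly (char_poly C) 0 = (-1) ^ m * det C" .
    moreover have "poly (char_poly C) 0 = (-1) ^ m * prod_list as"
      unfolding cp poly_prod_list using prod_list_uminus[of as] len by (simp add: o_def)
    ultimately show ?thesis by simp
  qed
  ultimately show ?thesis using len that by blast
qed

lemma Re_Im_norm_pos:
  fixes v :: "complex vec"
  assumes v: "v \<in> carrier_vec m" and v0: "v \<noteq> 0\<^sub>v m"
  shows "0 < map_vec Re v \<bullet> map_vec Re v + map_vec Im v \<bullet> map_vec Im v"
proof -
  obtain i where i: "i < m" and "v $ i \<noteq> 0"
    using v0 v by (metis carrier_vecD eq_vecI index_zero_vec)
  hence "0 < (Re (v $ i))\<^sup>2 + (Im (v $ i))\<^sup>2" by (simp add: complex_eq_iff sum_power2_gt_zero_iff)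
  also have "\<dots> \<le> (\<Sum>k<m. (Re (v $ k))\<^sup>2 + (Im (v $ k))\<^sup>2)"
    by (rule member_le_sum) (use i in auto)
  also have "\<dots> = map_vec Re v \<bullet> map_vec Re v + map_vec Im v \<bullet> map_vec Im v"
    using v by (simp add: scalar_prod_def atLeast0LessThan sum.distrib power2_eq_square)
  finally show ?thesis .
qed

text \<open>The eigenvalues of \<open>A\<^sup>-\<^sup>1 B\<close> are real: an eigenvector \<open>v\<close> gives \<open>v\<^sup>* B v = \<mu> v\<^sup>* A v\<close>.\<close>

lemma eigenvalue_eq_rayleigh_quotient:
  fixes B C :: "real mat"
  assumes L0: "0 < L0" and A: "sym_coercive_mat m L0 A"
    and B: "B \<in> carrier_mat m m" "transpose_mat B = B"
    and C: "C \<in> carrier_mat m m" and AC: "A * C = B"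
    and ev: "eigenvalue (map_mat complex_of_real C) \<mu>"
  obtains x y where "x \<in> carrier_vec m" and "y \<in> carrier_vec m" and "0 < x \<bullet> x + y \<bullet> y"
    and "\<mu> = complex_of_real (hermitian_form B x y / hermitian_form A x y)"
proof -
  have Am: "A \<in> carrier_mat m m" and symA: "transpose_mat A = A"
    using A by (auto simp: sym_coercive_mat_def)
  let ?A = "map_mat complex_of_real A" and ?B = "map_mat complex_of_real B" and ?C = "map_mat complex_of_real C"
  obtain v where "eigenvector ?C v \<mu>" using ev unfolding eigenvalue_def by blast
  hence v: "v \<in> carrier_vec m" and v0: "v \<noteq> 0\<^sub>v m" and Cv: "?C *\<^sub>v v = \<mu> \<cdot>\<^sub>v v"
    unfolding eigenvector_def using C by auto
  have "?B = ?A * ?C" using of_real_hom.mat_hom_mult[OF Am C] AC by simp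
  hence "?B *\<^sub>v v = \<mu> \<cdot>\<^sub>v (?A *\<^sub>v v)"
    using Am C v by (simp add: assoc_mult_mat_vec Cv mult_mat_vec)
  hence "(\<Sum>i<m. cnj (v $ i) * (?B *\<^sub>v v) $ i) = \<mu> * (\<Sum>i<m. cnj (v $ i) * (?A *\<^sub>v v) $ i)"
    using Am by (simp add: sum_distrib_left mult_ac)
  hence eq: "complex_of_real (hermitian_form B x y) = \<mu> * complex_of_real (hermitian_form A x y)"
    if "x = map_vec Re v" "y = map_vec Im v" for x y
    unfolding that hermitian_form_complex[OF Am symA v] hermitian_form_complex[OF B v] .
  define x y where "x = map_vec Re v" and "y = map_vec Im v"
  have x: "x \<in> carrier_vec m" and y: "y \<in> carrier_vec m" using v by (auto simp: x_def y_def)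
  have pos: "0 < x \<bullet> x + y \<bullet> y" unfolding x_def y_def by (rule Re_Im_norm_pos[OF v v0])
  have "0 < hermitian_form A x y"
    using hermitian_form_lower_bound[OF A x y] L0 pos by (smt (verit) mult_pos_pos)
  hence "\<mu> = complex_of_real (hermitian_form B x y / hermitian_form A x y)"
    using eq[OF x_def y_def] by (simp add: field_simps)
  thus ?thesis using that x y pos by blast
qed

lemma det_eq_prod_list_rayleigh_quotients:
  fixes B C :: "real mat"
  assumes L0: "0 < L0" and A: "sym_coercive_mat m L0 A"
    and B: "B \<in> carrier_mat m m" "transpose_mat B = B"
    and C: "C \<in> carrier_mat m m" and AC: "A * C = B"
  obtains \<mu>s where "length \<mu>s = m" and "det C = prod_list \<mu>s"
    and "\<And>\<mu>. \<mu> \<in> set \<mu>s \<Longrightarrow> \<exists>x\<in>carrier_vec m. \<exists>y\<in>carrier_vec m.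
       0 < x \<bullet> x + y \<bullet> y \<and> \<mu> = hermitian_form B x y / hermitian_form A x y"
proof -
  have Cc: "map_mat complex_of_real C \<in> carrier_mat m m" using C by simp
  obtain as where len: "length as = m" and det: "det (map_mat complex_of_real C) = prod_list as"
    and ev: "\<And>a. a \<in> set as \<Longrightarrow> eigenvalue (map_mat complex_of_real C) a"
    using det_eq_prod_list_eigenvalues[OF Cc] by blast
  have rayleigh: "\<exists>x\<in>carrier_vec m. \<exists>y\<in>carrier_vec m. 0 < x \<bullet> x + y \<bullet> y \<and>
      a = complex_of_real (hermitian_form B x y / hermitian_form A x y)" if "a \<in> set as" for a
    using eigenvalue_eq_rayleigh_quotient[OF L0 A B C AC ev[OF that]] by metis
  define \<mu>s where "\<mu>s = map Re as"
  have as: "as = map complex_of_real \<mu>s"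
    unfolding \<mu>s_def by (rule nth_equalityI) (auto dest!: rayleigh[OF nth_mem])
  have "complex_of_real (det C) = complex_of_real (prod_list \<mu>s)"
    using det by (simp add: as of_real_hom.hom_det flip: of_real_hom.hom_prod_list)
  hence "det C = prod_list \<mu>s" by (rule of_real_eq_iff[THEN iffD1])
  moreover have "length \<mu>s = m" using len by (simp add: \<mu>s_def)
  ultimately show ?thesis
    using that rayleigh unfolding \<mu>s_def by fastforce
qed

lemma sym_coercive_mat_one: "sym_coercive_mat m 1 (1\<^sub>m m)"
  by (simp add: sym_coercive_mat_def)

lemma det_pos_if_sym_coercive:
  assumes L0: "0 < L0" and A: "sym_coercive_mat m L0 A"
  shows "0 < det A"
proof -
  have Am: "A \<in> carrier_mat m m" "transpose_mat A = A" using A by (auto simp: sym_coercive_mat_def)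
  obtain \<mu>s where det: "det A = prod_list \<mu>s"
    and rayleigh: "\<And>\<mu>. \<mu> \<in> set \<mu>s \<Longrightarrow> \<exists>x\<in>carrier_vec m. \<exists>y\<in>carrier_vec m.
       0 < x \<bullet> x + y \<bullet> y \<and> \<mu> = hermitian_form A x y / hermitian_form (1\<^sub>m m) x y"
    by (rule det_eq_prod_list_rayleigh_quotients[of 1 m "1\<^sub>m m" A A])
      (use Am sym_coercive_mat_one in auto)
  have "\<forall>\<mu>\<in>set \<mu>s. 0 < \<mu>"
  proof
    fix \<mu> assume "\<mu> \<in> set \<mu>s"
    then obtain x y where x: "x \<in> carrier_vec m" and y: "y \<in> carrier_vec m" and S: "0 < x \<bullet> x + y \<bullet> y"
      and \<mu>: "\<mu> = hermitian_form A x y / hermitian_form (1\<^sub>m m) x y"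
      using rayleigh by blast
    have "0 < hermitian_form A x y"
      using hermitian_form_lower_bound[OF A x y] L0 S by (smt (verit) mult_pos_pos)
    moreover have "hermitian_form (1\<^sub>m m) x y = x \<bullet> x + y \<bullet> y" using x y by (simp add: hermitian_form_def)
    ultimately show "0 < \<mu>" using S \<mu> by simp
  qed
  hence "0 < prod_list \<mu>s" by (induction \<mu>s) auto
  thus ?thesis using det by simp
qed

lemma scalar_prod_inv_mat_le:
  assumes L0: "0 < L0" and A: "sym_coercive_mat m L0 A" and w: "w \<in> carrier_vec m"
  shows "(inv_mat A *\<^sub>v w) \<bullet> (inv_mat A *\<^sub>v w) \<le> (w \<bullet> w) / L0\<^sup>2"
proof -
  have Am: "A \<in> carrier_mat m m" using A by (simp add: sym_coercive_mat_def)
  note inv = inv_mat_if_det_nonzero[OF Am det_pos_if_sym_coercive[OF L0 A, THEN less_imp_neq, symmetric]]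
  define y where "y = inv_mat A *\<^sub>v w"
  have y: "y \<in> carrier_vec m" using inv(1) w by (simp add: y_def)
  have "A *\<^sub>v y = w" using Am inv w by (simp add: y_def assoc_mult_mat_vec[symmetric, of A m m])
  hence yAy: "L0 * (y \<bullet> y) \<le> y \<bullet> w" using A y by (auto simp: sym_coercive_mat_def)
  have "(\<Sum>i<m. 2 * L0 * (y $ i * w $ i)) \<le> (\<Sum>i<m. L0\<^sup>2 * (y $ i * y $ i) + w $ i * w $ i)"
  proof (rule sum_mono)
    fix i
    have "0 \<le> (L0 * y $ i - w $ i)\<^sup>2" by simp
    thus "2 * L0 * (y $ i * w $ i) \<le> L0\<^sup>2 * (y $ i * y $ i) + w $ i * w $ i"
      by (simp add: power2_eq_square algebra_simps)
  qed
  hence "2 * L0 * (y \<bullet> w) \<le> L0\<^sup>2 * (y \<bullet> y) + w \<bullet> w"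
    using y w by (simp add: scalar_prod_def atLeast0LessThan sum_distrib_left sum.distrib)
  moreover have "2 * L0 * (L0 * (y \<bullet> y)) \<le> 2 * L0 * (y \<bullet> w)"
    using yAy L0 by simp
  ultimately have "L0\<^sup>2 * (y \<bullet> y) \<le> w \<bullet> w" by (simp add: power2_eq_square algebra_simps)
  thus ?thesis using L0 by (simp add: y_def field_simps)
qed

lemma quadratic_form_inv_mat_diff:
  fixes A B :: "real mat"
  assumes A: "A \<in> carrier_mat m m" "transpose_mat A = A" "det A \<noteq> 0"
    and B: "B \<in> carrier_mat m m" "det B \<noteq> 0" and w: "w \<in> carrier_vec m"
  shows "w \<bullet> (inv_mat A *\<^sub>v w) - w \<bullet> (inv_mat B *\<^sub>v w)
    = (inv_mat A *\<^sub>v w) \<bullet> ((B - A) *\<^sub>v (inv_mat B *\<^sub>v w))"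
proof -
  note invA = inv_mat_if_det_nonzero[OF A(1,3)] and invB = inv_mat_if_det_nonzero[OF B]
  define u y where "u = inv_mat B *\<^sub>v w" and "y = inv_mat A *\<^sub>v w"
  have u: "u \<in> carrier_vec m" and y: "y \<in> carrier_vec m"
    using invA(1) invB(1) w by (simp_all add: u_def y_def)
  have Bu: "B *\<^sub>v u = w" using B invB w by (simp add: u_def assoc_mult_mat_vec[symmetric, of B m m])
  have Ay: "A *\<^sub>v y = w" using A invA w by (simp add: y_def assoc_mult_mat_vec[symmetric, of A m m])
  have "y \<bullet> ((B - A) *\<^sub>v u) = y \<bullet> w - y \<bullet> (A *\<^sub>v u)"
    using A B u y w by (simp add: minus_mult_distrib_mat_vec Bu scalar_prod_minus_distrib[of _ m])
  also have "y \<bullet> (A *\<^sub>v u) = w \<bullet> u"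
    using transpose_vec_mult_scalar[OF A(1) u y] A(2) Ay by simp
  also have "y \<bullet> w = w \<bullet> y" using y w by (rule comm_scalar_prod)
  finally show ?thesis unfolding u_def y_def by simp
qed

lemma abs_quadratic_form_inv_mat_diff_le:
  assumes L0: "0 < L0" and A: "sym_coercive_mat m L0 A" and B: "sym_coercive_mat m L0 B"
    and w: "w \<in> carrier_vec m" and \<sigma>: "0 \<le> \<sigma>"
    and close: "\<And>p q. p \<in> carrier_vec m \<Longrightarrow> q \<in> carrier_vec m \<Longrightarrow>
      \<bar>p \<bullet> ((B - A) *\<^sub>v q)\<bar> \<le> \<sigma> / 2 * (p \<bullet> p + q \<bullet> q)"
  shows "\<bar>w \<bullet> (inv_mat A *\<^sub>v w) - w \<bullet> (inv_mat B *\<^sub>v w)\<bar> \<le> \<sigma> * (w \<bullet> w) / L0\<^sup>2"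
proof -
  have Am: "A \<in> carrier_mat m m" "transpose_mat A = A" and Bm: "B \<in> carrier_mat m m"
    using A B by (auto simp: sym_coercive_mat_def)
  have dA: "det A \<noteq> 0" and dB: "det B \<noteq> 0"
    using det_pos_if_sym_coercive[OF L0 A] det_pos_if_sym_coercive[OF L0 B] by simp_all
  have invs: "inv_mat A *\<^sub>v w \<in> carrier_vec m" "inv_mat B *\<^sub>v w \<in> carrier_vec m"
    using inv_mat_if_det_nonzero(1)[OF Am(1) dA] inv_mat_if_det_nonzero(1)[OF Bm dB] w by auto
  have "\<bar>w \<bullet> (inv_mat A *\<^sub>v w) - w \<bullet> (inv_mat B *\<^sub>v w)\<bar>
      \<le> \<sigma> / 2 * ((inv_mat A *\<^sub>v w) \<bullet> (inv_mat A *\<^sub>v w) + (inv_mat B *\<^sub>v w) \<bullet> (inv_mat B *\<^sub>v w))"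
    unfolding quadratic_form_inv_mat_diff[OF Am dA Bm dB w] by (rule close[OF invs])
  also have "\<dots> \<le> \<sigma> / 2 * ((w \<bullet> w) / L0\<^sup>2 + (w \<bullet> w) / L0\<^sup>2)"
    using scalar_prod_inv_mat_le[OF L0 A w] scalar_prod_inv_mat_le[OF L0 B w] \<sigma>
    by (intro mult_left_mono add_mono) auto
  finally show ?thesis by simp
qed

lemma rayleigh_quotient_near_one:
  assumes L0: "0 < L0" and A: "sym_coercive_mat m L0 A" and B: "sym_coercive_mat m L0 B"
    and close: "\<And>x. x \<in> carrier_vec m \<Longrightarrow> \<bar>x \<bullet> ((B - A) *\<^sub>v x)\<bar> \<le> \<sigma> * (x \<bullet> x)"
    and x: "x \<in> carrier_vec m" and y: "y \<in> carrier_vec m" and S: "0 < x \<bullet> x + y \<bullet> y"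
  shows "0 < hermitian_form B x y / hermitian_form A x y
    \<and> \<bar>hermitian_form B x y / hermitian_form A x y - 1\<bar> \<le> \<sigma> / L0"
proof -
  have Am: "A \<in> carrier_mat m m" and Bm: "B \<in> carrier_mat m m"
    using A B by (auto simp: sym_coercive_mat_def)
  define QA QB S where "QA = hermitian_form A x y" and "QB = hermitian_form B x y"
    and "S = x \<bullet> x + y \<bullet> y"
  have LS: "0 < L0 * S" using L0 S by (simp add: S_def)
  have QA: "L0 * S \<le> QA" unfolding QA_def S_def by (rule hermitian_form_lower_bound[OF A x y])
  have QB: "L0 * S \<le> QB" unfolding QB_def S_def by (rule hermitian_form_lower_bound[OF B x y])
  have diff: "\<bar>QB - QA\<bar> \<le> \<sigma> * S"
    using close[OF x] close[OF y] by (simp add: QA_def QB_def S_def hermitian_form_diff[OF Am Bm x y] distrib_left)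
  have QA_pos: "0 < QA" using LS QA by linarith
  have "0 \<le> \<sigma> * S" using diff abs_ge_zero order_trans by blast
  hence "0 \<le> \<sigma>" using LS L0 by (auto simp: zero_le_mult_iff zero_less_mult_iff)
  have "\<bar>QB - QA\<bar> * L0 \<le> \<sigma> * S * L0" using diff L0 by (intro mult_right_mono) auto
  also have "\<dots> \<le> \<sigma> * QA" using mult_left_mono[OF QA \<open>0 \<le> \<sigma>\<close>] by (simp add: mult_ac)
  finally have "\<bar>QB - QA\<bar> / QA \<le> \<sigma> / L0"
    using QA_pos L0 by (simp add: pos_divide_le_eq pos_le_divide_eq)
  moreover have "QB / QA - 1 = (QB - QA) / QA" using QA_pos by (simp add: diff_divide_distrib)
  moreover have "0 < QB / QA" using QA_pos QB LS by simp
  ultimately show ?thesis using QA_pos by (simp add: QA_def QB_def abs_divide)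
qed

lemma det_ratio_eq_prod_list:
  assumes L0: "0 < L0" and A: "sym_coercive_mat m L0 A" and B: "sym_coercive_mat m L0 B"
    and close: "\<And>x. x \<in> carrier_vec m \<Longrightarrow> \<bar>x \<bullet> ((B - A) *\<^sub>v x)\<bar> \<le> \<sigma> * (x \<bullet> x)"
  obtains \<mu>s where "length \<mu>s = m" and "det B / det A = prod_list \<mu>s"
    and "\<forall>\<mu>\<in>set \<mu>s. 0 < \<mu> \<and> \<bar>\<mu> - 1\<bar> \<le> \<sigma> / L0"
proof -
  have Am: "A \<in> carrier_mat m m" and Bm: "B \<in> carrier_mat m m" "transpose_mat B = B"
    using A B by (auto simp: sym_coercive_mat_def)
  have dA: "0 < det A" by (rule det_pos_if_sym_coercive[OF L0 A])
  note inv = inv_mat_if_det_nonzero[OF Am dA[THEN less_imp_neq, symmetric]]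
  define C where "C = inv_mat A * B"
  have C: "C \<in> carrier_mat m m" using inv(1) Bm by (simp add: C_def)
  have AC: "A * C = B" using Am inv Bm by (simp add: C_def assoc_mult_mat[symmetric, of A m m])
  have "det A * det C = det B" using det_mult[OF Am C] AC by simp
  hence detC: "det C = det B / det A" using dA by (simp add: field_simps)
  obtain \<mu>s where len: "length \<mu>s = m" and det: "det C = prod_list \<mu>s"
    and rayleigh: "\<And>\<mu>. \<mu> \<in> set \<mu>s \<Longrightarrow> \<exists>x\<in>carrier_vec m. \<exists>y\<in>carrier_vec m.
       0 < x \<bullet> x + y \<bullet> y \<and> \<mu> = hermitian_form B x y / hermitian_form A x y"
    using det_eq_prod_list_rayleigh_quotients[OF L0 A Bm C AC] by blast
  have "0 < \<mu> \<and> \<bar>\<mu> - 1\<bar> \<le> \<sigma> / L0" if "\<mu> \<in> set \<mu>s" for \<mu>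
    using rayleigh[OF that] rayleigh_quotient_near_one[OF L0 A B close] by blast
  thus ?thesis using that len det detC by auto
qed

section \<open>The Gaussian ratio\<close>

lemma vnorm_square: "(vnorm w)\<^sup>2 = w \<bullet> w"
proof -
  have "0 \<le> w \<bullet> w" unfolding scalar_prod_def by (intro sum_nonneg) simp
  thus ?thesis by (simp add: vnorm_def)
qed

lemma Qm_ratio:
  assumes "0 < det A" and "0 < det B"
  shows "Qm m w A / Qm m w B = sqrt (det A / det B) * exp (- (w \<bullet> (A *\<^sub>v w) - w \<bullet> (B *\<^sub>v w)) / 2)"
proof -
  have "exp (- (w \<bullet> (A *\<^sub>v w) - w \<bullet> (B *\<^sub>v w)) / 2)
      = exp (- (w \<bullet> (A *\<^sub>v w)) / 2) / exp (- (w \<bullet> (B *\<^sub>v w)) / 2)"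
    by (subst exp_diff[symmetric]) (simp add: field_simps)
  thus ?thesis using assms by (simp add: Qm_def real_sqrt_divide)
qed

lemma Qm_inv_mat_ratio_le:
  assumes m: "1 \<le> m" and L0: "0 < L0"
    and A: "sym_coercive_mat m L0 A" and B: "sym_coercive_mat m L0 B"
    and w: "w \<in> carrier_vec m" and \<sigma>: "0 \<le> \<sigma>"
    and close: "\<And>p q. p \<in> carrier_vec m \<Longrightarrow> q \<in> carrier_vec m \<Longrightarrow>
      \<bar>p \<bullet> ((B - A) *\<^sub>v q)\<bar> \<le> \<sigma> / 2 * (p \<bullet> p + q \<bullet> q)"
    and \<theta>M: "real m * \<sigma> / L0 < M" and \<phi>M: "(vnorm w)\<^sup>2 * \<sigma> / L0\<^sup>2 < M"
  shows "\<bar>Qm m w (inv_mat A) / Qm m w (inv_mat B) - 1\<bar>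
    \<le> (2 + exp M) * ((vnorm w)\<^sup>2 * \<sigma> / L0\<^sup>2 + real m * \<sigma> / L0)"
proof -
  obtain \<mu>s where len: "length \<mu>s = m" and ratio: "det B / det A = prod_list \<mu>s"
    and \<mu>s: "\<forall>\<mu>\<in>set \<mu>s. 0 < \<mu> \<and> \<bar>\<mu> - 1\<bar> \<le> \<sigma> / L0"
  proof (rule det_ratio_eq_prod_list[OF L0 A B])
    fix x :: "real vec" assume "x \<in> carrier_vec m"
    thus "\<bar>x \<bullet> ((B - A) *\<^sub>v x)\<bar> \<le> \<sigma> * (x \<bullet> x)" using close[of x x] by simp
  qed
  have dets: "0 < det A" "0 < det B"
    using det_pos_if_sym_coercive[OF L0 A] det_pos_if_sym_coercive[OF L0 B] .
  have det_inv: "det (inv_mat A) = 1 / det A" "det (inv_mat B) = 1 / det B"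
    using A B dets by (auto simp: sym_coercive_mat_def intro!: det_inv_mat)
  have X: "\<bar>w \<bullet> (inv_mat A *\<^sub>v w) - w \<bullet> (inv_mat B *\<^sub>v w)\<bar> \<le> (vnorm w)\<^sup>2 * \<sigma> / L0\<^sup>2"
    using abs_quadratic_form_inv_mat_diff_le[OF L0 A B w \<sigma> close]
    by (simp add: vnorm_square mult.commute)
  have "Qm m w (inv_mat A) / Qm m w (inv_mat B)
      = sqrt (prod_list \<mu>s) * exp (- (w \<bullet> (inv_mat A *\<^sub>v w) - w \<bullet> (inv_mat B *\<^sub>v w)) / 2)"
    using dets by (simp add: Qm_ratio det_inv ratio[symmetric])
  thus ?thesis
    using abs_sqrt_prod_list_mult_exp_minus_one_le[OF len m \<mu>s _ X \<phi>M] \<theta>M by simp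
qed

theorem proposition4p7:
  fixes M :: real
  assumes "M > 0"
  shows "\<exists>c1::real. \<forall>(m::nat) (lam::nat \<Rightarrow> real) (L0::real) (L1::real) (a::real mat) (b::real mat)
            (w::real vec) (t::real).
     m \<ge> 1 \<longrightarrow>
     (\<forall>i<m. 0 < lam i) \<longrightarrow>
     (\<forall>i j. i \<le> j \<longrightarrow> j < m \<longrightarrow> lam i \<le> lam j) \<longrightarrow>
     0 < L0 \<longrightarrow> L0 \<le> L1 \<longrightarrow>
     pos_def_mat m a \<longrightarrow> pos_def_mat m b \<longrightarrow>
     loewner_between m L0 L1 a \<longrightarrow> loewner_between m L0 L1 b \<longrightarrow>
     w \<in> carrier_vec m \<longrightarrow>
     real m * s_norm m (a - b) / L0 < M \<longrightarrow>
     (vnorm w)\<^sup>2 * s_norm m (a - b) / L0\<^sup>2 < M \<longrightarrow>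
     t > 0 \<longrightarrow>
     \<bar>Qm m w (Tilde_inv m lam a t) / Qm m w (Tilde_inv m lam b t) - 1\<bar>
       \<le> c1 * ((vnorm w)\<^sup>2 * s_norm m (a - b) / L0\<^sup>2 + real m * s_norm m (a - b) / L0)"
proof (intro exI[of _ "2 + exp M"] allI impI)
  fix m :: nat and lam :: "nat \<Rightarrow> real" and L0 L1 :: real and a b :: "real mat"
    and w :: "real vec" and t :: real
  assume m: "m \<ge> 1" and lam: "\<forall>i<m. 0 < lam i" and "\<forall>i j. i \<le> j \<longrightarrow> j < m \<longrightarrow> lam i \<le> lam j"
    and L0: "0 < L0" and "L0 \<le> L1" and pa: "pos_def_mat m a" and pb: "pos_def_mat m b"
    and la: "loewner_between m L0 L1 a" and lb: "loewner_between m L0 L1 b" and w: "w \<in> carrier_vec m"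
    and \<theta>M: "real m * s_norm m (a - b) / L0 < M" and \<phi>M: "(vnorm w)\<^sup>2 * s_norm m (a - b) / L0\<^sup>2 < M"
    and t: "t > 0"
  have "sym_coercive_mat m L0 (tilde_mat m lam c t)"
    if "pos_def_mat m c" and "loewner_between m L0 L1 c" for c
    using that tilde_mat_carrier[OF lam t] transpose_tilde_mat[OF lam t] tilde_mat_lower_bound[OF lam t]
    by (simp add: sym_coercive_mat_def pos_def_mat_def loewner_between_def)
  moreover have "\<bar>p \<bullet> ((tilde_mat m lam b t - tilde_mat m lam a t) *\<^sub>v q)\<bar> \<le> s_norm m (a - b) / 2 * (p \<bullet> p + q \<bullet> q)"
    if "p \<in> carrier_vec m" and "q \<in> carrier_vec m" for p q
    using abs_scalar_prod_tilde_mat_diff_le[OF lam t _ _ that] pa pb by (simp add: pos_def_mat_def)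
  ultimately show "\<bar>Qm m w (Tilde_inv m lam a t) / Qm m w (Tilde_inv m lam b t) - 1\<bar>
      \<le> (2 + exp M) * ((vnorm w)\<^sup>2 * s_norm m (a - b) / L0\<^sup>2 + real m * s_norm m (a - b) / L0)"
    unfolding Tilde_inv_def
    using Qm_inv_mat_ratio_le[OF m L0 _ _ w s_norm_nonneg[OF m] _ \<theta>M \<phi>M] pa pb la lb by blast
qed

end
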